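(* Let $F$ be a field, $n\in\mathbb N\cup\{\infty\}$, and let $\varphi$ be an almost identity PC-map of $\mathrm{UT}(n,F)$. Then $\varphi$ is a subcentral map: for every $a\in\mathrm{UT}(n,F)$, $\varphi(a)\in aC_2$. Concretely, if $n=\infty$ then $\varphi(a)=a$ for all $a$, and if $n$ is finite then $\varphi(a)_{ij}=a_{ij}$ for all $(i,j)\notin\{(1,n-1),(1,n),(2,n)\}$.
   Context: $\mathrm{UT}(n,F)$ is the group of upper unitriangular $n\times n$ matrices over $F$ (for $n=\infty$: all $\mathbb N\times\mathbb N$ matrices with $1$ on the diagonal and $0$ below it). $e$ is the identity, $e_{ij}$ the matrix unit, $t_{ij}(\alpha)=e+\alpha e_{ij}$ ($i<j$). $[x,y]=xyx^{-1}y^{-1}$. A PC-map is a bijection $\varphi$ of the group with $\varphi([x,y])=[\varphi(x),\varphi(y)]$ for all $x,y$; it is almost identity if $\varphi(t_{ij}(\alpha))=t_{ij}(\alpha)$ for all $i<j$, $\alpha\in F$. $C_2$ is the second center of $\mathrm{UT}(n,F)$ (the preimage of the center of $\mathrm{UT}(n,F)/C$, where $C$ is the center); it is trivial for $n=\infty$ and equals $\{t_{1\,n-1}(\alpha)t_{1n}(\beta)t_{2n}(\gamma):\alpha,\beta,\gamma\in F\}$ for finite $n\ge3$. A map $\psi$ is subcentral if $\psi(a)=af(a)$ for some function $f:\mathrm{UT}(n,F)\to C_2$. *)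

theory Defs
  imports "HOL-Algebra.Group" "HOL-Library.Extended_Nat"
begin

text \<open>Matrices indexed by positive naturals 1,2,...; n :: enat, with n = \<infinity> meaning
  all N x N matrices. Entries outside the index range are 0 by convention.\<close>

type_synonym 'a mat = "nat \<Rightarrow> nat \<Rightarrow> 'a"

definition idx :: "enat \<Rightarrow> nat set" where
  "idx n = {i. 1 \<le> i \<and> enat i \<le> n}"

definition UT_carrier :: "enat \<Rightarrow> ('a::field) mat set" where
  "UT_carrier n = {A. (\<forall>i j. (i \<notin> idx n \<or> j \<notin> idx n) \<longrightarrow> A i j = 0)
                    \<and> (\<forall>i\<in>idx n. A i i = 1)
                    \<and> (\<forall>i j. j < i \<longrightarrow> A i j = 0)}"

definition ut_one :: "enat \<Rightarrow> ('a::field) mat" where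
  "ut_one n = (\<lambda>i j. if i \<in> idx n \<and> i = j then 1 else 0)"

text \<open>Product of upper triangular matrices: the sum over k runs only over i..j, so it is
  finite also for n = \<infinity>.\<close>
definition ut_mult :: "enat \<Rightarrow> ('a::field) mat \<Rightarrow> 'a mat \<Rightarrow> 'a mat" where
  "ut_mult n A B = (\<lambda>i j. if i \<in> idx n \<and> j \<in> idx n then (\<Sum>k\<in>{i..j}. A i k * B k j) else 0)"

definition UT :: "enat \<Rightarrow> ('a::field) mat monoid" where
  "UT n = \<lparr>carrier = UT_carrier n, mult = ut_mult n, one = ut_one n\<rparr>"

definition ut_comm :: "enat \<Rightarrow> ('a::field) mat \<Rightarrow> 'a mat \<Rightarrow> 'a mat" where
  "ut_comm n x y = x \<otimes>\<^bsub>UT n\<^esub> y \<otimes>\<^bsub>UT n\<^esub> inv\<^bsub>UT n\<^esub> x \<otimes>\<^bsub>UT n\<^esub> inv\<^bsub>UT n\<^esub> y"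

definition transv :: "enat \<Rightarrow> nat \<Rightarrow> nat \<Rightarrow> 'a::field \<Rightarrow> 'a mat" where
  "transv n i j \<alpha> = (\<lambda>k l. ut_one n k l + (if k = i \<and> l = j then \<alpha> else 0))"

definition PC_map :: "enat \<Rightarrow> (('a::field) mat \<Rightarrow> 'a mat) \<Rightarrow> bool" where
  "PC_map n \<phi> \<longleftrightarrow> bij_betw \<phi> (UT_carrier n) (UT_carrier n)
     \<and> (\<forall>x\<in>UT_carrier n. \<forall>y\<in>UT_carrier n. \<phi> (ut_comm n x y) = ut_comm n (\<phi> x) (\<phi> y))"

definition almost_identity :: "enat \<Rightarrow> (('a::field) mat \<Rightarrow> 'a mat) \<Rightarrow> bool" where
  "almost_identity n \<phi> \<longleftrightarrow>
     (\<forall>i\<in>idx n. \<forall>j\<in>idx n. \<forall>\<alpha>. i < j \<longrightarrow> \<phi> (transv n i j \<alpha>) = transv n i j \<alpha>)"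

definition ut_center :: "enat \<Rightarrow> ('a::field) mat set" where
  "ut_center n = {z \<in> UT_carrier n. \<forall>x\<in>UT_carrier n. ut_mult n z x = ut_mult n x z}"

definition ut_center2 :: "enat \<Rightarrow> ('a::field) mat set" where
  "ut_center2 n = {z \<in> UT_carrier n. \<forall>x\<in>UT_carrier n. ut_comm n z x \<in> ut_center n}"

definition subcentral :: "enat \<Rightarrow> (('a::field) mat \<Rightarrow> 'a mat) \<Rightarrow> bool" where
  "subcentral n \<psi> \<longleftrightarrow> (\<exists>f. (\<forall>a\<in>UT_carrier n. f a \<in> ut_center2 n \<and> \<psi> a = ut_mult n a (f a)))"

end

theory Submission
  imports Defs
begin

text \<open>The commutator of Y with t_kl(1), commuted again with t_rs(c), is the column matrix
  e + sum_i c (Y_ik (Y^-1)_lr - [i = k][l = r]) e_is. As \<phi> preserves commutators and fixes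
  transvections, \<phi>(Y) and Y yield the same such matrices, provided \<phi> also fixes these column
  matrices; the latter follows by induction on the length of the column. Reading off entries
  shows that \<phi>(Y) agrees with Y in every column j with j + 2 \<le> n, and that \<phi>(Y)^-1 agrees
  with Y^-1 at (l, r) for 2 \<le> l < r < n. For n = \<infinity> this is everything. For finite n = m,
  conjugating \<phi> by the automorphism x \<mapsto> x^-1 reflected in the antidiagonal transports these
  facts to rows \<ge> 3 of \<phi>(Y)^-1 and rows \<ge> 2 of \<phi>(Y); then Y Y^-1 = e recovers the last
  column below row 2. So \<phi>(Y) differs from Y only at (1, m-1), (1, m), (2, m), and a
  unitriangular matrix that is the identity off these positions lies in the second centre.\<close>

section \<open>The group of unitriangular matrices\<close>

lemma idx_downward: "j \<in> idx n \<Longrightarrow> 1 \<le> i \<Longrightarrow> i \<le> j \<Longrightarrow> i \<in> idx n"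
  unfolding idx_def by (auto intro: order_trans[of "enat i" "enat j" n])

lemma idx_enat: "i \<in> idx (enat m) \<longleftrightarrow> 1 \<le> i \<and> i \<le> m"
  by (simp add: idx_def)

lemma UT_carrier_outside: "A \<in> UT_carrier n \<Longrightarrow> i \<notin> idx n \<or> j \<notin> idx n \<Longrightarrow> A i j = 0"
  unfolding UT_carrier_def by blast

lemma UT_carrier_diag: "A \<in> UT_carrier n \<Longrightarrow> i \<in> idx n \<Longrightarrow> A i i = 1"
  unfolding UT_carrier_def by blast

lemma UT_carrier_below: "A \<in> UT_carrier n \<Longrightarrow> j < i \<Longrightarrow> A i j = 0"
  unfolding UT_carrier_def by blast

lemma UT_carrier_lower: "A \<in> UT_carrier n \<Longrightarrow> j \<le> i \<Longrightarrow> A i j = ut_one n i j"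
  unfolding ut_one_def
  by (metis UT_carrier_below UT_carrier_diag UT_carrier_outside le_neq_implies_less)

lemma UT_carrier_first_col: "A \<in> UT_carrier n \<Longrightarrow> 1 \<in> idx n \<Longrightarrow> A i 1 = (if i = 1 then 1 else 0)"
  by (cases "i = 0") (auto simp: UT_carrier_outside idx_def UT_carrier_lower ut_one_def)

lemma UT_carrier_last_row:
  assumes "A \<in> UT_carrier (enat m)" "1 \<le> m"
  shows "A m j = (if j = m then 1 else 0)"
  using assms UT_carrier_below[of A "enat m" j m] UT_carrier_diag[of A "enat m" m]
    UT_carrier_outside[of A "enat m" m j]
  by (cases j m rule: linorder_cases) (auto simp: idx_enat)

lemma ut_one_row: "i \<in> idx n \<Longrightarrow> ut_one n i j = (if i = j then 1 else 0)"
  by (simp add: ut_one_def)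

lemma ut_one_col: "j \<in> idx n \<Longrightarrow> ut_one n i j = (if i = j then 1 else 0)"
  by (auto simp: ut_one_def)

lemma ut_one_closed: "ut_one n \<in> UT_carrier n"
  unfolding UT_carrier_def ut_one_def by auto

lemma ut_mult_apply:
  assumes "A \<in> UT_carrier n" "B \<in> UT_carrier n"
  shows "ut_mult n A B i j = (\<Sum>k\<in>{i..j}. A i k * B k j)"
proof (cases "i \<in> idx n \<and> j \<in> idx n")
  case True thus ?thesis by (simp add: ut_mult_def)
next
  case False
  have "(\<Sum>k\<in>{i..j}. A i k * B k j) = 0"
    by (rule sum.neutral) (use False UT_carrier_outside[OF assms(1)] UT_carrier_outside[OF assms(2)] in auto)
  thus ?thesis using False by (simp add: ut_mult_def)
qed

lemma ut_mult_closed: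
  assumes "A \<in> UT_carrier n" "B \<in> UT_carrier n"
  shows "ut_mult n A B \<in> UT_carrier n"
  unfolding UT_carrier_def
proof (intro CollectI conjI allI impI ballI)
  fix i j assume "i \<notin> idx n \<or> j \<notin> idx n"
  thus "ut_mult n A B i j = 0" by (auto simp: ut_mult_def)
next
  fix i assume "i \<in> idx n"
  thus "ut_mult n A B i i = 1"
    using UT_carrier_diag[OF assms(1)] UT_carrier_diag[OF assms(2)] by (simp add: ut_mult_def)
next
  fix i j :: nat assume "j < i"
  thus "ut_mult n A B i j = 0" by (simp add: ut_mult_apply[OF assms])
qed

text \<open>Upper triangularity lets every partial sum range over all of {i..j}.\<close>
lemma ut_mult_assoc:
  assumes A: "A \<in> UT_carrier n" and B: "B \<in> UT_carrier n" and C: "C \<in> UT_carrier n"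
  shows "ut_mult n (ut_mult n A B) C = ut_mult n A (ut_mult n B C)"
proof (intro ext)
  fix i j
  have left: "(\<Sum>h\<in>{i..k}. A i h * B h k) * C k j = (\<Sum>h\<in>{i..j}. A i h * B h k * C k j)"
    if "k \<in> {i..j}" for k
    unfolding sum_distrib_right
    by (rule sum.mono_neutral_left) (use that UT_carrier_below[OF B] in auto)
  have right: "A i h * (\<Sum>k\<in>{h..j}. B h k * C k j) = (\<Sum>k\<in>{i..j}. A i h * B h k * C k j)"
    if "h \<in> {i..j}" for h
    unfolding sum_distrib_left mult.assoc
    by (rule sum.mono_neutral_left) (use that UT_carrier_below[OF B] in auto)
  have "ut_mult n (ut_mult n A B) C i j = (\<Sum>k\<in>{i..j}. \<Sum>h\<in>{i..j}. A i h * B h k * C k j)"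
    by (simp add: ut_mult_apply ut_mult_closed A B C left)
  also have "\<dots> = (\<Sum>h\<in>{i..j}. \<Sum>k\<in>{i..j}. A i h * B h k * C k j)"
    by (rule sum.swap)
  also have "\<dots> = ut_mult n A (ut_mult n B C) i j"
    by (simp add: ut_mult_apply ut_mult_closed A B C right)
  finally show "ut_mult n (ut_mult n A B) C i j = ut_mult n A (ut_mult n B C) i j" .
qed

lemma ut_mult_one_left:
  assumes A: "A \<in> UT_carrier n"
  shows "ut_mult n (ut_one n) A = A"
proof (intro ext)
  fix i j
  show "ut_mult n (ut_one n) A i j = A i j"
  proof (cases "i \<in> idx n")
    case True
    have "ut_mult n (ut_one n) A i j = (\<Sum>k\<in>{i..j}. (if i = k then A k j else 0))"
      using True by (intro trans[OF ut_mult_apply[OF ut_one_closed A]] sum.cong) (auto simp: ut_one_def)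
    also have "\<dots> = A i j" using UT_carrier_below[OF A, of j i] by (auto simp: sum.delta)
    finally show ?thesis .
  next
    case False thus ?thesis by (simp add: ut_mult_def UT_carrier_outside[OF A])
  qed
qed

lemma ut_mult_one_right:
  assumes A: "A \<in> UT_carrier n"
  shows "ut_mult n A (ut_one n) = A"
proof (intro ext)
  fix i j
  show "ut_mult n A (ut_one n) i j = A i j"
  proof (cases "j \<in> idx n")
    case True
    have "ut_mult n A (ut_one n) i j = (\<Sum>k\<in>{i..j}. (if k = j then A i k else 0))"
      using True by (intro trans[OF ut_mult_apply[OF A ut_one_closed]] sum.cong) (auto simp: ut_one_def)
    also have "\<dots> = A i j" using UT_carrier_below[OF A, of j i] by (auto simp: sum.delta')
    finally show ?thesis .
  next
    case False thus ?thesis by (simp add: ut_mult_def UT_carrier_outside[OF A])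
  qed
qed

function ut_inv_entry :: "('a::field) mat \<Rightarrow> nat \<Rightarrow> nat \<Rightarrow> 'a" where
  "ut_inv_entry A i j =
     (if j < i then 0 else if j = i then 1 else - (\<Sum>k\<in>{i..<j}. ut_inv_entry A i k * A k j))"
  by auto
termination by (relation "measure (\<lambda>(A, i, j). j)") auto

declare ut_inv_entry.simps [simp del]

definition ut_inv_mat :: "enat \<Rightarrow> ('a::field) mat \<Rightarrow> 'a mat" where
  "ut_inv_mat n A = (\<lambda>i j. if i \<in> idx n \<and> j \<in> idx n then ut_inv_entry A i j else 0)"

lemma ut_inv_mat_closed: "ut_inv_mat n A \<in> UT_carrier n"
  unfolding UT_carrier_def ut_inv_mat_def by (auto simp: ut_inv_entry.simps)

lemma ut_inv_mat_mult:
  assumes A: "A \<in> UT_carrier n"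
  shows "ut_mult n (ut_inv_mat n A) A = ut_one n"
proof (intro ext)
  fix i j
  show "ut_mult n (ut_inv_mat n A) A i j = ut_one n i j"
  proof (cases "i \<in> idx n \<and> j \<in> idx n \<and> i < j")
    case True
    have "ut_mult n (ut_inv_mat n A) A i j = (\<Sum>k\<in>{i..j}. ut_inv_entry A i k * A k j)"
      unfolding ut_mult_apply[OF ut_inv_mat_closed A]
      by (intro sum.cong refl) (use True in \<open>auto simp: ut_inv_mat_def idx_def intro: order_trans[of "enat _" "enat j" n]\<close>)
    also have "{i..j} = insert j {i..<j}" using True by auto
    also have "(\<Sum>k\<in>insert j {i..<j}. ut_inv_entry A i k * A k j) = 0"
      using True UT_carrier_diag[OF A, of j] by (simp add: ut_inv_entry.simps[of A i j])
    finally show ?thesis using True by (simp add: ut_one_def)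
  next
    case False
    have prod: "ut_mult n (ut_inv_mat n A) A \<in> UT_carrier n"
      by (rule ut_mult_closed[OF ut_inv_mat_closed A])
    show ?thesis
    proof (cases "j \<le> i")
      case True thus ?thesis by (rule UT_carrier_lower[OF prod])
    next
      case False
      with \<open>\<not> (i \<in> idx n \<and> j \<in> idx n \<and> i < j)\<close> show ?thesis
        by (auto simp: ut_mult_def ut_one_def)
    qed
  qed
qed

lemma UT_simps [simp]:
  "carrier (UT n) = UT_carrier n" "mult (UT n) = ut_mult n" "one (UT n) = ut_one n"
  by (simp_all add: UT_def)

lemma group_UT: "group (UT n :: ('a::field) mat monoid)"
proof (rule groupI, goal_cases)
  case 1 thus ?case by (simp add: ut_mult_closed)
next
  case 2 thus ?case by (simp add: ut_one_closed)
next
  case 3 thus ?case by (simp add: ut_mult_assoc)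
next
  case 4 thus ?case by (simp add: ut_mult_one_left)
next
  case (5 x) thus ?case using ut_inv_mat_closed ut_inv_mat_mult by fastforce
qed

abbreviation ut_inv :: "enat \<Rightarrow> ('a::field) mat \<Rightarrow> 'a mat" where
  "ut_inv n x \<equiv> m_inv (UT n) x"

lemma ut_inv_closed: "x \<in> UT_carrier n \<Longrightarrow> ut_inv n x \<in> UT_carrier n"
  using group.inv_closed[OF group_UT, of x n] by simp

lemma ut_mult_inv_right: "x \<in> UT_carrier n \<Longrightarrow> ut_mult n x (ut_inv n x) = ut_one n"
  using group.r_inv[OF group_UT, of x n] by simp

lemma ut_mult_inv_left: "x \<in> UT_carrier n \<Longrightarrow> ut_mult n (ut_inv n x) x = ut_one n"
  using group.l_inv[OF group_UT, of x n] by simp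

lemma ut_inv_unique:
  assumes "y \<in> UT_carrier n" "x \<in> UT_carrier n" "ut_mult n y x = ut_one n"
  shows "ut_inv n x = (y::('a::field) mat)"
  using group.inv_equality[OF group_UT] assms by fastforce

lemma ut_inv_mult:
  "x \<in> UT_carrier n \<Longrightarrow> y \<in> UT_carrier n \<Longrightarrow>
    ut_inv n (ut_mult n x y) = ut_mult n (ut_inv n y) (ut_inv n (x::('a::field) mat))"
  using group.inv_mult_group[OF group_UT, of x n y] by simp

lemma ut_inv_inv: "x \<in> UT_carrier n \<Longrightarrow> ut_inv n (ut_inv n x) = (x::('a::field) mat)"
  using group.inv_inv[OF group_UT, of x n] by simp

lemma ut_entry_eq_inv_sum:
  assumes c: "c \<in> UT_carrier n" and ij: "i < j" "j \<in> idx n"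
  shows "c i j = - (\<Sum>k\<in>{i..<j}. c i k * ut_inv n c k j)"
proof -
  have "0 = ut_mult n c (ut_inv n c) i j"
    using ij by (simp add: ut_mult_inv_right[OF c] ut_one_col)
  also have "\<dots> = (\<Sum>k\<in>insert j {i..<j}. c i k * ut_inv n c k j)"
    unfolding ut_mult_apply[OF c ut_inv_closed[OF c]] using ij by (intro sum.cong) auto
  also have "\<dots> = c i j + (\<Sum>k\<in>{i..<j}. c i k * ut_inv n c k j)"
    using UT_carrier_diag[OF ut_inv_closed[OF c] ij(2)] by simp
  finally show ?thesis by (simp add: eq_neg_iff_add_eq_0)
qed

lemma ut_comm_eq: "ut_comm n x y = ut_mult n (ut_mult n (ut_mult n x y) (ut_inv n x)) (ut_inv n y)"
  by (simp add: ut_comm_def)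

lemma ut_comm_closed: "x \<in> UT_carrier n \<Longrightarrow> y \<in> UT_carrier n \<Longrightarrow> ut_comm n x y \<in> UT_carrier n"
  by (simp add: ut_comm_eq ut_mult_closed ut_inv_closed)

lemma ut_comm_self: "x \<in> UT_carrier n \<Longrightarrow> ut_comm n x x = (ut_one n :: ('a::field) mat)"
  unfolding ut_comm_eq
  by (simp add: ut_mult_assoc ut_mult_closed ut_inv_closed ut_mult_inv_right ut_mult_one_right)

lemma ut_comm_eq_of_mult_eq:
  assumes x: "x \<in> UT_carrier n" and z: "z \<in> UT_carrier n" and T: "T \<in> UT_carrier n"
    and eq: "ut_mult n z x = ut_mult n T (ut_mult n x z)"
  shows "ut_comm n z x = (T::('a::field) mat)"
proof -
  have "ut_comm n z x = ut_mult n (ut_mult n T (ut_mult n (ut_mult n x z) (ut_inv n z))) (ut_inv n x)"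
    unfolding ut_comm_eq eq by (simp add: ut_mult_assoc ut_mult_closed ut_inv_closed x z T)
  also have "\<dots> = T"
    by (simp add: ut_mult_assoc ut_mult_closed ut_inv_closed x z T ut_mult_inv_right ut_mult_one_right)
  finally show ?thesis .
qed

section \<open>Transvections and their commutators\<close>

lemma ut_mult_row_update:
  assumes A: "A \<in> UT_carrier n" and B: "B \<in> UT_carrier n" and B': "B' \<in> UT_carrier n"
    and p: "p \<in> idx n"
    and B'_eq: "\<And>k j. B' k j = B k j + (if k = p then w j else 0)"
    and w: "\<And>j. j < p \<Longrightarrow> w j = 0"
  shows "ut_mult n A B' i j = ut_mult n A B i j + A i p * w j"
proof -
  have "ut_mult n A B' i j = (\<Sum>k\<in>{i..j}. A i k * B k j + (if k = p then A i p * w j else 0))"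
    unfolding ut_mult_apply[OF A B'] by (intro sum.cong refl) (simp add: B'_eq distrib_left)
  also have "\<dots> = ut_mult n A B i j + (if p \<in> {i..j} then A i p * w j else 0)"
    by (simp add: sum.distrib ut_mult_apply[OF A B] sum.delta')
  also have "\<dots> = ut_mult n A B i j + A i p * w j"
    using UT_carrier_below[OF A, of p i] w[of j] by auto
  finally show ?thesis .
qed

lemma ut_mult_col_update:
  assumes A: "A \<in> UT_carrier n" and A': "A' \<in> UT_carrier n" and B: "B \<in> UT_carrier n"
    and q: "q \<in> idx n"
    and A'_eq: "\<And>i k. A' i k = A i k + (if k = q then u i else 0)"
    and u: "\<And>i. q < i \<Longrightarrow> u i = 0"
  shows "ut_mult n A' B i j = ut_mult n A B i j + u i * B q j"
proof -
  have "ut_mult n A' B i j = (\<Sum>k\<in>{i..j}. A i k * B k j + (if k = q then u i * B q j else 0))"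
    unfolding ut_mult_apply[OF A' B] by (intro sum.cong refl) (simp add: A'_eq distrib_right)
  also have "\<dots> = ut_mult n A B i j + (if q \<in> {i..j} then u i * B q j else 0)"
    by (simp add: sum.distrib ut_mult_apply[OF A B] sum.delta')
  also have "\<dots> = ut_mult n A B i j + u i * B q j"
    using UT_carrier_below[OF B, of j q] u[of i] by auto
  finally show ?thesis .
qed

lemma transv_closed:
  assumes "1 \<le> p" "p < q" "q \<in> idx n"
  shows "transv n p q \<alpha> \<in> UT_carrier n"
proof -
  have "p \<in> idx n" using assms idx_downward by auto
  thus ?thesis using assms unfolding UT_carrier_def transv_def ut_one_def by auto
qed

lemma ut_mult_transv_right:
  assumes A: "A \<in> UT_carrier n" and pq: "1 \<le> p" "p < q" "q \<in> idx n"
  shows "ut_mult n A (transv n p q \<alpha>) i j = A i j + (if j = q then \<alpha> * A i p else 0)"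
proof -
  have "p \<in> idx n" using pq idx_downward by auto
  hence "ut_mult n A (transv n p q \<alpha>) i j = ut_mult n A (ut_one n) i j + A i p * (if j = q then \<alpha> else 0)"
    by (rule ut_mult_row_update[OF A ut_one_closed transv_closed[OF pq]])
      (use pq in \<open>auto simp: transv_def\<close>)
  thus ?thesis by (simp add: ut_mult_one_right[OF A])
qed

lemma ut_mult_transv_left:
  assumes A: "A \<in> UT_carrier n" and pq: "1 \<le> p" "p < q" "q \<in> idx n"
  shows "ut_mult n (transv n p q \<alpha>) A i j = A i j + (if i = p then \<alpha> * A q j else 0)"
proof -
  have "ut_mult n (transv n p q \<alpha>) A i j = ut_mult n (ut_one n) A i j + (if i = p then \<alpha> else 0) * A q j"
    by (rule ut_mult_col_update[OF ut_one_closed transv_closed[OF pq] A pq(3)])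
      (use pq in \<open>auto simp: transv_def\<close>)
  thus ?thesis by (simp add: ut_mult_one_left[OF A])
qed

lemma ut_inv_transv:
  assumes pq: "1 \<le> p" "p < q" "q \<in> idx n"
  shows "ut_inv n (transv n p q \<alpha>) = transv n p q (- \<alpha>)"
proof (rule ut_inv_unique[OF transv_closed[OF pq] transv_closed[OF pq]], intro ext)
  fix i j
  show "ut_mult n (transv n p q (- \<alpha>)) (transv n p q \<alpha>) i j = ut_one n i j"
    using pq by (simp add: ut_mult_transv_left[OF transv_closed[OF pq] pq]) (auto simp: transv_def ut_one_def)
qed

lemma ut_comm_transv:
  assumes Y: "Y \<in> UT_carrier n" and pq: "1 \<le> p" "p < q" "q \<in> idx n"
  shows "ut_comm n Y (transv n p q \<alpha>) i j
     = ut_one n i j + \<alpha> * (Y i p * ut_inv n Y q j - (if i = p \<and> j = q then 1 else 0))"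
proof -
  have p: "p \<in> idx n" using pq idx_downward by auto
  let ?t = "transv n p q \<alpha>" and ?Y' = "ut_inv n Y"
  have Y': "?Y' \<in> UT_carrier n" by (rule ut_inv_closed[OF Y])
  define Z where "Z = ut_mult n Y (ut_mult n ?t ?Y')"
  have Z: "Z \<in> UT_carrier n" unfolding Z_def by (simp add: ut_mult_closed transv_closed[OF pq] Y Y')
  have Z_apply: "Z i j = ut_one n i j + Y i p * (\<alpha> * ?Y' q j)" for i j
  proof -
    have "Z i j = ut_mult n Y ?Y' i j + Y i p * (\<alpha> * ?Y' q j)"
      unfolding Z_def
      by (rule ut_mult_row_update[OF Y Y' ut_mult_closed[OF transv_closed[OF pq] Y'] p
            ut_mult_transv_left[OF Y' pq]])
        (use UT_carrier_below[OF Y'] pq in auto)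
    thus ?thesis by (simp add: ut_mult_inv_right[OF Y])
  qed
  have "ut_comm n Y ?t = ut_mult n Z (transv n p q (- \<alpha>))"
    unfolding ut_comm_eq Z_def ut_inv_transv[OF pq]
    by (simp add: ut_mult_assoc ut_mult_closed Y transv_closed[OF pq] Y')
  hence "ut_comm n Y ?t i j = Z i j + (if j = q then - \<alpha> * Z i p else 0)"
    by (simp add: ut_mult_transv_right[OF Z pq])
  thus ?thesis
    using UT_carrier_below[OF Y', of p q] pq p by (auto simp: Z_apply ut_one_col algebra_simps)
qed

lemma ut_inv_unit_row:
  assumes X: "X \<in> UT_carrier n" and s: "s \<in> idx n" and row: "\<And>j. X s j = ut_one n s j"
  shows "ut_inv n X s j = ut_one n s j"
proof (cases "s \<le> j")
  case True
  have "ut_one n s j = ut_mult n X (ut_inv n X) s j" by (simp add: ut_mult_inv_right[OF X])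
  also have "\<dots> = (\<Sum>k\<in>{s..j}. (if k = s then ut_inv n X k j else 0))"
    unfolding ut_mult_apply[OF X ut_inv_closed[OF X]]
    by (intro sum.cong refl) (auto simp: row ut_one_row[OF s])
  also have "\<dots> = ut_inv n X s j" using True by (simp add: sum.delta')
  finally show ?thesis by simp
next
  case False
  thus ?thesis using UT_carrier_below[OF ut_inv_closed[OF X], of j s] by (simp add: ut_one_def)
qed

definition col_mat :: "enat \<Rightarrow> nat \<Rightarrow> (nat \<Rightarrow> 'a::field) \<Rightarrow> 'a mat" where
  "col_mat n s c = (\<lambda>i j. ut_one n i j + (if j = s then c i else 0))"

lemma col_mat_inj: "col_mat n s c = col_mat n s c' \<Longrightarrow> c i = c' i"
  unfolding col_mat_def by (drule fun_cong[of _ _ i], drule fun_cong[of _ _ s]) simp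

lemma col_mat_closed:
  assumes s: "s \<in> idx n" and c: "\<And>i. c i \<noteq> 0 \<Longrightarrow> 1 \<le> i \<and> i < s"
  shows "col_mat n s c \<in> UT_carrier n"
  unfolding UT_carrier_def col_mat_def ut_one_def
proof (intro CollectI conjI allI impI ballI)
  fix i j assume "i \<notin> idx n \<or> j \<notin> idx n"
  moreover have "c i = 0 \<or> i \<in> idx n" using c[of i] idx_downward[OF s, of i] by fastforce
  ultimately show "(if i \<in> idx n \<and> i = j then 1 else 0) + (if j = s then c i else 0) = 0"
    using s by auto
next
  fix i assume "i \<in> idx n"
  thus "(if i \<in> idx n \<and> i = i then 1 else (0::'a)) + (if i = s then c i else 0) = 1"
    using c[of i] by auto
next
  fix i j :: nat assume "j < i"
  thus "(if i \<in> idx n \<and> i = j then 1 else 0) + (if j = s then c i else 0) = 0"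
    using c[of i] by (cases "c i = 0") auto
qed

lemma ut_comm_comm_transv:
  assumes Y: "Y \<in> UT_carrier n" and klrs: "1 \<le> k" "k < l" "l \<le> r" "r < s" "s \<in> idx n"
  shows "ut_comm n (ut_comm n Y (transv n k l 1)) (transv n r s \<mu>)
       = col_mat n s (\<lambda>i. \<mu> * (Y i k * ut_inv n Y l r - (if i = k \<and> l = r then 1 else 0)))"
proof -
  have l: "l \<in> idx n" and r: "r \<in> idx n" using klrs idx_downward by auto
  define X where "X = ut_comm n Y (transv n k l 1)"
  have X: "X \<in> UT_carrier n"
    unfolding X_def by (rule ut_comm_closed[OF Y transv_closed]) (use klrs l in auto)
  have X_apply: "X i j = ut_one n i j + (Y i k * ut_inv n Y l j - (if i = k \<and> j = l then 1 else 0))"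
    for i j unfolding X_def by (subst ut_comm_transv[OF Y]) (use klrs l in auto)
  have "X s j = ut_one n s j" for j
    using UT_carrier_below[OF Y, of k s] klrs by (simp add: X_apply)
  hence X_inv_row: "ut_inv n X s j = ut_one n s j" for j
    by (rule ut_inv_unit_row[OF X klrs(5)])
  show ?thesis
    unfolding X_def[symmetric]
  proof (intro ext)
    fix i j
    have "ut_comm n X (transv n r s \<mu>) i j
        = ut_one n i j + \<mu> * (X i r * ut_inv n X s j - (if i = r \<and> j = s then 1 else 0))"
      by (rule ut_comm_transv[OF X]) (use klrs in auto)
    thus "ut_comm n X (transv n r s \<mu>) i j
        = col_mat n s (\<lambda>i. \<mu> * (Y i k * ut_inv n Y l r - (if i = k \<and> l = r then 1 else 0))) i j"
      using klrs r
      by (auto simp: X_inv_row X_apply ut_one_col ut_one_row[OF klrs(5)] col_mat_def algebra_simps)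
  qed
qed

lemma ut_comm_comm_transv_first_row:
  assumes Y: "Y \<in> UT_carrier n" and lr: "2 \<le> l" "l < r" "Suc r \<in> idx n"
  shows "ut_comm n (ut_comm n Y (transv n 1 l 1)) (transv n r (Suc r) 1)
       = transv n 1 (Suc r) (ut_inv n Y l r)"
proof -
  have "1 \<in> idx n" using lr idx_downward by auto
  hence "Y i (Suc 0) = (if i = Suc 0 then 1 else 0)" for i
    using UT_carrier_first_col[OF Y] by simp
  thus ?thesis
    using lr by (subst ut_comm_comm_transv[OF Y]) (auto simp: col_mat_def transv_def intro!: ext)
qed

lemma ut_comm_comm_transv_consecutive:
  assumes Y: "Y \<in> UT_carrier n" and j: "1 \<le> j" "Suc (Suc j) \<in> idx n"
  shows "ut_comm n (ut_comm n Y (transv n j (Suc j) 1)) (transv n (Suc j) (Suc (Suc j)) 1)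
       = col_mat n (Suc (Suc j)) (\<lambda>i. Y i j - (if i = j then 1 else 0))"
proof -
  have "Suc j \<in> idx n" using j idx_downward by auto
  thus ?thesis
    using j UT_carrier_diag[OF ut_inv_closed[OF Y]] by (subst ut_comm_comm_transv[OF Y]) auto
qed

lemma col_witness:
  assumes d: "\<And>i. d i \<noteq> 0 \<Longrightarrow> 1 \<le> i \<and> i < q" and q: "1 \<le> q" "Suc (Suc q) \<in> idx n"
  obtains a where "a \<in> UT_carrier n" "\<And>i. a i q = ut_one n i q + d i"
    "ut_inv n a (Suc q) (Suc (Suc q)) = 1"
proof
  let ?l = "Suc q" and ?r = "Suc (Suc q)"
  have qidx: "q \<in> idx n" and lidx: "?l \<in> idx n" using q idx_downward by auto
  have lr: "1 \<le> ?l" "?l < ?r" "?r \<in> idx n" using q by auto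
  define A where "A = col_mat n q d"
  have A: "A \<in> UT_carrier n" unfolding A_def by (rule col_mat_closed[OF qidx d])
  have T: "transv n ?l ?r (-1) \<in> UT_carrier n" by (rule transv_closed[OF lr])
  show "ut_mult n A (transv n ?l ?r (-1)) \<in> UT_carrier n" by (rule ut_mult_closed[OF A T])
  show "ut_mult n A (transv n ?l ?r (-1)) i q = ut_one n i q + d i" for i
  proof -
    have "ut_mult n A (transv n ?l ?r (-1)) i q = A i q" by (simp add: ut_mult_transv_right[OF A lr])
    thus ?thesis by (simp add: A_def col_mat_def)
  qed
  have "A ?l j = ut_one n ?l j" for j using d[of ?l] by (auto simp: A_def col_mat_def)
  hence A_inv_row: "ut_inv n A ?l j = ut_one n ?l j" for j by (rule ut_inv_unit_row[OF A lidx])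
  have "ut_inv n (ut_mult n A (transv n ?l ?r (-1))) = ut_mult n (transv n ?l ?r 1) (ut_inv n A)"
    by (simp add: ut_inv_mult[OF A T] ut_inv_transv[OF lr])
  thus "ut_inv n (ut_mult n A (transv n ?l ?r (-1))) ?l ?r = 1"
    using UT_carrier_diag[OF ut_inv_closed[OF A] lr(3)]
    by (simp add: ut_mult_transv_left[OF ut_inv_closed[OF A] lr] A_inv_row ut_one_row[OF lidx])
qed

section \<open>Almost identity commutator-preserving maps\<close>

locale pc_fix_transv =
  fixes n :: enat and \<phi> :: "('a::field) mat \<Rightarrow> 'a mat"
  assumes closed: "\<And>x. x \<in> UT_carrier n \<Longrightarrow> \<phi> x \<in> UT_carrier n"
    and comm: "\<And>x y. x \<in> UT_carrier n \<Longrightarrow> y \<in> UT_carrier n \<Longrightarrow>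
      \<phi> (ut_comm n x y) = ut_comm n (\<phi> x) (\<phi> y)"
    and fix_transv: "\<And>i j \<alpha>. i \<in> idx n \<Longrightarrow> j \<in> idx n \<Longrightarrow> i < j \<Longrightarrow>
      \<phi> (transv n i j \<alpha>) = transv n i j \<alpha>"
begin

lemma fix_one: "\<phi> (ut_one n) = ut_one n"
proof -
  have "\<phi> (ut_one n) = \<phi> (ut_comm n (ut_one n) (ut_one n))" by (simp add: ut_comm_self ut_one_closed)
  also have "\<dots> = ut_comm n (\<phi> (ut_one n)) (\<phi> (ut_one n))" by (rule comm[OF ut_one_closed ut_one_closed])
  finally show ?thesis by (simp add: ut_comm_self closed ut_one_closed)
qed

lemma comm_comm_transv:
  assumes Y: "Y \<in> UT_carrier n" and klrs: "1 \<le> k" "k < l" "l \<le> r" "r < s" "s \<in> idx n"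
  shows "\<phi> (ut_comm n (ut_comm n Y (transv n k l \<alpha>)) (transv n r s \<beta>))
       = ut_comm n (ut_comm n (\<phi> Y) (transv n k l \<alpha>)) (transv n r s \<beta>)"
proof -
  have "k \<in> idx n" "l \<in> idx n" "r \<in> idx n" using klrs idx_downward by auto
  thus ?thesis
    using klrs by (simp add: comm ut_comm_closed Y transv_closed fix_transv)
qed

lemma inv_entry_fixed:
  assumes Y: "Y \<in> UT_carrier n" and lr: "2 \<le> l" "l < r" "Suc r \<in> idx n"
  shows "ut_inv n (\<phi> Y) l r = ut_inv n Y l r"
proof -
  have "1 \<in> idx n" using lr idx_downward by auto
  hence "transv n 1 (Suc r) (ut_inv n Y l r) = \<phi> (transv n 1 (Suc r) (ut_inv n Y l r))"
    using lr by (simp add: fix_transv)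
  also have "\<dots> = \<phi> (ut_comm n (ut_comm n Y (transv n 1 l 1)) (transv n r (Suc r) 1))"
    by (simp only: ut_comm_comm_transv_first_row[OF Y lr])
  also have "\<dots> = ut_comm n (ut_comm n (\<phi> Y) (transv n 1 l 1)) (transv n r (Suc r) 1)"
    by (rule comm_comm_transv[OF Y]) (use lr in auto)
  also have "\<dots> = transv n 1 (Suc r) (ut_inv n (\<phi> Y) l r)"
    by (rule ut_comm_comm_transv_first_row[OF closed[OF Y] lr])
  finally have "transv n 1 (Suc r) (ut_inv n Y l r) 1 (Suc r) = transv n 1 (Suc r) (ut_inv n (\<phi> Y) l r) 1 (Suc r)"
    by simp
  thus ?thesis using lr by (simp add: transv_def ut_one_def)
qed

text \<open>For the matrix a of col_witness with d = c / \<mu>, the double commutator of a with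
  t_q(q+1)(1) and t_(q+1)s(\<mu>) is col_mat s c, and with t_(q+2)s(\<mu>) in place of the latter it is
  col_mat s (c(q := \<mu>)). The first shows that \<phi> fixes column q of a; inv_entry_fixed
  controls the other entry the second one depends on.\<close>
lemma col_mat_fixed_update:
  assumes s: "s \<in> idx n" and q: "1 \<le> q" "q + 3 \<le> s" and \<mu>: "\<mu> \<noteq> 0"
    and c: "\<And>i. c i \<noteq> 0 \<Longrightarrow> 1 \<le> i \<and> i < q"
    and fixed: "\<phi> (col_mat n s c) = col_mat n s c"
  shows "\<phi> (col_mat n s (c(q := \<mu>))) = col_mat n s (c(q := \<mu>))"
proof -
  let ?l = "Suc q" and ?r = "Suc (Suc q)"
  have c_q: "c q = 0" using c[of q] by auto
  have rs: "?r < s" "Suc ?r \<in> idx n" using q s idx_downward by auto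
  obtain a where a: "a \<in> UT_carrier n" and a_col: "\<And>i. a i q = ut_one n i q + c i / \<mu>"
    and a_inv: "ut_inv n a ?l ?r = 1"
    by (rule col_witness[of "\<lambda>i. c i / \<mu>" q n]) (use c q rs idx_downward in auto)
  have qidx: "q \<in> idx n" and lidx: "?l \<in> idx n" using q rs idx_downward by auto
  define D where "D Y r = ut_comm n (ut_comm n Y (transv n q ?l 1)) (transv n r s \<mu>)" for Y r
  have D: "D Y r = col_mat n s (\<lambda>i. \<mu> * (Y i q * ut_inv n Y ?l r - (if i = q \<and> ?l = r then 1 else 0)))"
    if "Y \<in> UT_carrier n" "r \<in> {?l, ?r}" for Y r
    unfolding D_def by (rule ut_comm_comm_transv) (use that q rs s in auto)
  have \<phi>_D: "\<phi> (D a r) = D (\<phi> a) r" if "r \<in> {?l, ?r}" for r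
    unfolding D_def by (rule comm_comm_transv) (use that a q rs s in auto)
  have a_inv_diag: "ut_inv n Y ?l ?l = 1" if "Y \<in> UT_carrier n" for Y
    by (rule UT_carrier_diag[OF ut_inv_closed[OF that] lidx])
  have "D a ?l = col_mat n s c"
    using \<mu> by (simp add: D[OF a] a_col a_inv_diag[OF a] ut_one_col[OF qidx])
  with fixed have "D (\<phi> a) ?l = D a ?l" by (simp add: \<phi>_D[symmetric])
  hence col_eq: "col_mat n s (\<lambda>i. \<mu> * (\<phi> a i q - (if i = q then 1 else 0)))
      = col_mat n s (\<lambda>i. \<mu> * (a i q - (if i = q then 1 else 0)))"
    by (simp add: D[OF a] D[OF closed[OF a]] a_inv_diag[OF a] a_inv_diag[OF closed[OF a]])
  have \<phi>a_col: "\<phi> a i q = a i q" for i using col_mat_inj[OF col_eq, of i] \<mu> by simp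
  have "ut_inv n (\<phi> a) ?l ?r = ut_inv n a ?l ?r"
    by (rule inv_entry_fixed[OF a]) (use q rs in auto)
  hence "D (\<phi> a) ?r = D a ?r" by (simp add: D[OF a] D[OF closed[OF a]] \<phi>a_col)
  moreover have "D a ?r = col_mat n s (c(q := \<mu>))"
    using \<mu> c_q
    by (auto simp: D[OF a] a_col a_inv ut_one_col[OF qidx] distrib_left intro!: arg_cong[where f="col_mat n s"])
  ultimately show ?thesis using \<phi>_D[of ?r] by simp
qed

lemma col_mat_fixed:
  assumes s: "s \<in> idx n" and ps: "p + 3 \<le> s" and c: "\<And>i. c i \<noteq> 0 \<Longrightarrow> 1 \<le> i \<and> i \<le> p"
  shows "\<phi> (col_mat n s c) = col_mat n s c"
  using ps c
proof (induction p arbitrary: c)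
  case 0
  hence "c = (\<lambda>_. 0)" by fastforce
  hence "col_mat n s c = ut_one n" by (simp add: col_mat_def)
  thus ?case by (simp add: fix_one)
next
  case (Suc p)
  have supp: "1 \<le> i \<and> i \<le> p" if "c i \<noteq> 0" "i \<noteq> Suc p" for i
    using that Suc.prems(2)[of i] by auto
  have IH: "\<phi> (col_mat n s (c(Suc p := 0))) = col_mat n s (c(Suc p := 0))"
    by (rule Suc.IH) (use Suc.prems(1) in \<open>auto dest: supp split: if_splits\<close>)
  show ?case
  proof (cases "c (Suc p) = 0")
    case True
    thus ?thesis using IH by (simp add: fun_upd_idem)
  next
    case False
    have "\<phi> (col_mat n s ((c(Suc p := 0))(Suc p := c (Suc p))))
        = col_mat n s ((c(Suc p := 0))(Suc p := c (Suc p)))"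
      by (rule col_mat_fixed_update[OF s _ _ False _ IH])
        (use Suc.prems(1) in \<open>auto simp: Suc_le_eq dest: supp split: if_splits\<close>)
    thus ?thesis by simp
  qed
qed

lemma entry_fixed:
  assumes Y: "Y \<in> UT_carrier n" and j: "Suc (Suc j) \<in> idx n"
  shows "\<phi> Y i j = Y i j"
proof (cases "j = 0")
  case True
  thus ?thesis using UT_carrier_outside[OF Y] UT_carrier_outside[OF closed[OF Y]] by (simp add: idx_def)
next
  case False
  have jidx: "j \<in> idx n" using j False idx_downward by auto
  have supp: "1 \<le> i \<and> i \<le> j - 1" if "Y i j - (if i = j then 1 else 0) \<noteq> 0" for i
    using that UT_carrier_outside[OF Y, of 0 j] UT_carrier_below[OF Y, of j i]
      UT_carrier_diag[OF Y jidx] False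
    by (cases "i = 0"; cases i j rule: linorder_cases) (auto simp: idx_def)
  have "col_mat n (Suc (Suc j)) (\<lambda>i. Y i j - (if i = j then 1 else 0))
      = \<phi> (col_mat n (Suc (Suc j)) (\<lambda>i. Y i j - (if i = j then 1 else 0)))"
    by (rule col_mat_fixed[OF j, symmetric]) (use False supp in auto)
  also have "\<dots> = col_mat n (Suc (Suc j)) (\<lambda>i. \<phi> Y i j - (if i = j then 1 else 0))"
    using False j
    by (simp add: ut_comm_comm_transv_consecutive[symmetric] Y closed comm_comm_transv)
  finally show ?thesis using col_mat_inj by fastforce
qed

end

section \<open>Reflection in the antidiagonal\<close>

definition antitranspose :: "nat \<Rightarrow> ('a::field) mat \<Rightarrow> 'a mat" where
  "antitranspose m A = (\<lambda>i j. A (Suc m - j) (Suc m - i))"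

text \<open>x \<mapsto> antitranspose (x^-1) is an automorphism of UT(m) sending t_ij(\<alpha>) to
  t_(m+1-j)(m+1-i)(-\<alpha>); conjugating \<phi> by it turns facts about the first columns of \<phi>(Y)
  into facts about the last rows of \<phi>(Y)^-1.\<close>
definition antidiag_aut :: "nat \<Rightarrow> ('a::field) mat \<Rightarrow> 'a mat" where
  "antidiag_aut m x = antitranspose m (ut_inv (enat m) x)"

lemma antitranspose_closed:
  assumes A: "A \<in> UT_carrier (enat m)"
  shows "antitranspose m A \<in> UT_carrier (enat m)"
  unfolding UT_carrier_def antitranspose_def
proof (intro CollectI conjI allI impI ballI)
  fix i j assume "i \<notin> idx (enat m) \<or> j \<notin> idx (enat m)"
  hence "Suc m - j \<notin> idx (enat m) \<or> Suc m - i \<notin> idx (enat m)" by (auto simp: idx_enat)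
  thus "A (Suc m - j) (Suc m - i) = 0" using UT_carrier_outside[OF A] by blast
next
  fix i assume "i \<in> idx (enat m)"
  hence "Suc m - i \<in> idx (enat m)" by (auto simp: idx_enat)
  thus "A (Suc m - i) (Suc m - i) = 1" by (rule UT_carrier_diag[OF A])
next
  fix i j :: nat assume ji: "j < i"
  show "A (Suc m - j) (Suc m - i) = 0"
  proof (cases "i \<le> m")
    case True
    hence "Suc m - i < Suc m - j" using ji by auto
    thus ?thesis by (rule UT_carrier_below[OF A])
  next
    case False thus ?thesis using UT_carrier_outside[OF A] by (simp add: idx_enat)
  qed
qed

lemma antitranspose_mult:
  assumes A: "A \<in> UT_carrier (enat m)" and B: "B \<in> UT_carrier (enat m)"
  shows "antitranspose m (ut_mult (enat m) A B) = ut_mult (enat m) (antitranspose m B) (antitranspose m A)"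
proof (intro ext)
  fix i j
  show "antitranspose m (ut_mult (enat m) A B) i j = ut_mult (enat m) (antitranspose m B) (antitranspose m A) i j"
  proof (cases "i \<in> idx (enat m) \<and> j \<in> idx (enat m)")
    case True
    have "antitranspose m (ut_mult (enat m) A B) i j
        = (\<Sum>k\<in>{Suc m - j..Suc m - i}. A (Suc m - j) k * B k (Suc m - i))"
      by (simp add: antitranspose_def ut_mult_apply[OF A B])
    also have "\<dots> = (\<Sum>k\<in>{i..j}. A (Suc m - j) (Suc m - k) * B (Suc m - k) (Suc m - i))"
      by (rule sum.reindex_bij_witness[of _ "\<lambda>k. Suc m - k" "\<lambda>k. Suc m - k"])
        (use True in \<open>auto simp: idx_enat\<close>)
    also have "\<dots> = ut_mult (enat m) (antitranspose m B) (antitranspose m A) i j"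
      unfolding ut_mult_apply[OF antitranspose_closed[OF B] antitranspose_closed[OF A]]
      by (simp add: antitranspose_def mult.commute)
    finally show ?thesis .
  next
    case False
    thus ?thesis
      using UT_carrier_outside[OF antitranspose_closed[OF ut_mult_closed[OF A B]]]
        UT_carrier_outside[OF ut_mult_closed[OF antitranspose_closed[OF B] antitranspose_closed[OF A]]]
      by metis
  qed
qed

lemma antitranspose_one: "antitranspose m (ut_one (enat m)) = ut_one (enat m)"
proof (intro ext)
  fix i j
  have "(Suc m - j \<in> idx (enat m) \<and> Suc m - j = Suc m - i) \<longleftrightarrow> (i \<in> idx (enat m) \<and> i = j)"
    unfolding idx_enat by linarith
  thus "antitranspose m (ut_one (enat m)) i j = ut_one (enat m) i j"
    by (simp add: antitranspose_def ut_one_def)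
qed

lemma antitranspose_antitranspose:
  assumes A: "A \<in> UT_carrier (enat m)"
  shows "antitranspose m (antitranspose m A) = A"
proof (intro ext)
  fix i j
  show "antitranspose m (antitranspose m A) i j = A i j"
  proof (cases "i \<in> idx (enat m) \<and> j \<in> idx (enat m)")
    case True thus ?thesis by (simp add: antitranspose_def idx_enat Suc_diff_le)
  next
    case False thus ?thesis
      using UT_carrier_outside[OF antitranspose_closed[OF antitranspose_closed[OF A]]]
        UT_carrier_outside[OF A]
      by metis
  qed
qed

lemma antitranspose_inv:
  assumes A: "A \<in> UT_carrier (enat m)"
  shows "ut_inv (enat m) (antitranspose m A) = antitranspose m (ut_inv (enat m) A)"
  by (rule ut_inv_unique[OF antitranspose_closed[OF ut_inv_closed[OF A]] antitranspose_closed[OF A]])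
    (simp add: antitranspose_mult[OF A ut_inv_closed[OF A], symmetric] ut_mult_inv_right[OF A]
      antitranspose_one)

lemma antidiag_aut_closed: "x \<in> UT_carrier (enat m) \<Longrightarrow> antidiag_aut m x \<in> UT_carrier (enat m)"
  by (simp add: antidiag_aut_def antitranspose_closed ut_inv_closed)

lemma antidiag_aut_comm:
  assumes x: "x \<in> UT_carrier (enat m)" and y: "y \<in> UT_carrier (enat m)"
  shows "antidiag_aut m (ut_comm (enat m) x y) = ut_comm (enat m) (antidiag_aut m x) (antidiag_aut m y)"
proof -
  have mult: "antidiag_aut m (ut_mult (enat m) x y) = ut_mult (enat m) (antidiag_aut m x) (antidiag_aut m y)"
    if "x \<in> UT_carrier (enat m)" "y \<in> UT_carrier (enat m)" for x y
    using that by (simp add: antidiag_aut_def ut_inv_mult antitranspose_mult ut_inv_closed)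
  have inv: "antidiag_aut m (ut_inv (enat m) x) = ut_inv (enat m) (antidiag_aut m x)"
    if "x \<in> UT_carrier (enat m)" for x
    using that by (simp add: antidiag_aut_def ut_inv_inv antitranspose_inv ut_inv_closed)
  show ?thesis
    unfolding ut_comm_eq by (simp add: mult inv ut_mult_closed ut_inv_closed x y)
qed

lemma antidiag_aut_antidiag_aut:
  assumes x: "x \<in> UT_carrier (enat m)"
  shows "antidiag_aut m (antidiag_aut m x) = x"
  by (simp add: antidiag_aut_def antitranspose_inv ut_inv_closed x ut_inv_inv antitranspose_antitranspose)

lemma antidiag_aut_transv:
  assumes pq: "1 \<le> p" "p < q" "q \<le> m"
  shows "antidiag_aut m (transv (enat m) p q \<alpha>) = transv (enat m) (Suc m - q) (Suc m - p) (- \<alpha>)"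
proof -
  have "q \<in> idx (enat m)" using pq by (simp add: idx_enat)
  hence "antidiag_aut m (transv (enat m) p q \<alpha>) = antitranspose m (transv (enat m) p q (- \<alpha>))"
    using pq by (simp add: antidiag_aut_def ut_inv_transv)
  also have "\<dots> = transv (enat m) (Suc m - q) (Suc m - p) (- \<alpha>)"
  proof (intro ext)
    fix i j
    have "ut_one (enat m) (Suc m - j) (Suc m - i) = (ut_one (enat m) i j :: 'a)"
      using fun_cong[OF fun_cong[OF antitranspose_one[of m]], of i j] by (simp add: antitranspose_def)
    moreover have "(Suc m - j = p \<and> Suc m - i = q) \<longleftrightarrow> (i = Suc m - q \<and> j = Suc m - p)"
      using pq by auto
    ultimately show "antitranspose m (transv (enat m) p q (- \<alpha>)) i j
        = transv (enat m) (Suc m - q) (Suc m - p) (- \<alpha>) i j"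
      by (simp add: antitranspose_def transv_def)
  qed
  finally show ?thesis .
qed

lemma pc_fix_transv_antidiag_conj:
  assumes "pc_fix_transv (enat m) \<phi>"
  shows "pc_fix_transv (enat m) (\<lambda>x. antidiag_aut m (\<phi> (antidiag_aut m x)))"
proof -
  interpret pc_fix_transv "enat m" \<phi> by fact
  show ?thesis
  proof
    fix x :: "'a mat" assume "x \<in> UT_carrier (enat m)"
    thus "antidiag_aut m (\<phi> (antidiag_aut m x)) \<in> UT_carrier (enat m)"
      by (simp add: antidiag_aut_closed closed)
  next
    fix x y :: "'a mat" assume "x \<in> UT_carrier (enat m)" "y \<in> UT_carrier (enat m)"
    thus "antidiag_aut m (\<phi> (antidiag_aut m (ut_comm (enat m) x y)))
        = ut_comm (enat m) (antidiag_aut m (\<phi> (antidiag_aut m x))) (antidiag_aut m (\<phi> (antidiag_aut m y)))"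
      by (simp add: antidiag_aut_comm antidiag_aut_closed closed comm)
  next
    fix i j :: nat and \<alpha> :: 'a
    assume "i \<in> idx (enat m)" "j \<in> idx (enat m)" "i < j"
    hence ij: "1 \<le> i" "i < j" "j \<le> m" by (auto simp: idx_enat)
    have "antidiag_aut m (transv (enat m) i j \<alpha>) = transv (enat m) (Suc m - j) (Suc m - i) (- \<alpha>)"
      by (rule antidiag_aut_transv[OF ij])
    moreover have "\<phi> (transv (enat m) (Suc m - j) (Suc m - i) (- \<alpha>)) = transv (enat m) (Suc m - j) (Suc m - i) (- \<alpha>)"
      using ij by (intro fix_transv) (auto simp: idx_enat)
    moreover have "antidiag_aut m (transv (enat m) (Suc m - j) (Suc m - i) (- \<alpha>)) = transv (enat m) i j \<alpha>"
      using antidiag_aut_transv[of "Suc m - j" "Suc m - i" m "- \<alpha>"] ij by auto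
    ultimately show "antidiag_aut m (\<phi> (antidiag_aut m (transv (enat m) i j \<alpha>))) = transv (enat m) i j \<alpha>"
      by simp
  qed
qed

abbreviation corner :: "nat \<Rightarrow> (nat \<times> nat) set" where
  "corner m \<equiv> {(1, m - 1), (1, m), (2, m)}"

locale pc_fix_transv_fin = pc_fix_transv "enat m" \<phi>
  for m :: nat and \<phi> :: "('a::field) mat \<Rightarrow> 'a mat"
begin

sublocale reflected: pc_fix_transv "enat m" "\<lambda>x. antidiag_aut m (\<phi> (antidiag_aut m x))"
  by (rule pc_fix_transv_antidiag_conj[OF pc_fix_transv_axioms])

lemma reflected_apply:
  "a \<in> UT_carrier (enat m) \<Longrightarrow> antidiag_aut m (\<phi> (antidiag_aut m (antidiag_aut m a))) = antidiag_aut m (\<phi> a)"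
  by (simp add: antidiag_aut_antidiag_aut)

lemma inv_entry_fixed_lower:
  assumes a: "a \<in> UT_carrier (enat m)" and i: "3 \<le> i" "i \<le> m"
  shows "ut_inv (enat m) (\<phi> a) i j = ut_inv (enat m) a i j"
proof (cases "1 \<le> j \<and> j \<le> m")
  case True
  have "antidiag_aut m (\<phi> a) (Suc m - j) (Suc m - i) = antidiag_aut m a (Suc m - j) (Suc m - i)"
    using reflected.entry_fixed[OF antidiag_aut_closed[OF a], of "Suc m - i" "Suc m - j"] i
    by (simp add: reflected_apply[OF a] idx_enat)
  thus ?thesis using True i by (simp add: antidiag_aut_def antitranspose_def)
next
  case False
  hence "j \<notin> idx (enat m)" by (simp add: idx_enat)
  thus ?thesis using UT_carrier_outside ut_inv_closed closed a by metis
qed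

lemma entry_fixed_lower:
  assumes a: "a \<in> UT_carrier (enat m)" and ij: "2 \<le> i" "j < m"
  shows "\<phi> a i j = a i j"
proof (cases "j \<le> i")
  case True thus ?thesis using UT_carrier_lower closed a by metis
next
  case False
  have "ut_inv (enat m) (antidiag_aut m (\<phi> a)) (Suc m - j) (Suc m - i)
      = ut_inv (enat m) (antidiag_aut m a) (Suc m - j) (Suc m - i)"
    using reflected.inv_entry_fixed[OF antidiag_aut_closed[OF a], of "Suc m - j" "Suc m - i"] ij False
    by (simp add: reflected_apply[OF a] idx_enat)
  hence "antitranspose m (\<phi> a) (Suc m - j) (Suc m - i) = antitranspose m a (Suc m - j) (Suc m - i)"
    by (simp add: antidiag_aut_def antitranspose_inv ut_inv_closed a closed ut_inv_inv)
  thus ?thesis using ij False by (simp add: antitranspose_def)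
qed

text \<open>Column m is recovered from a a^-1 = e: row i of \<phi>(a) left of column m and column m of
  \<phi>(a)^-1 from row i on are already known.\<close>
lemma entry_fixed_last_col:
  assumes a: "a \<in> UT_carrier (enat m)" and i: "3 \<le> i"
  shows "\<phi> a i m = a i m"
proof (cases "i < m")
  case True
  have m: "m \<in> idx (enat m)" using True by (simp add: idx_enat)
  have "(\<Sum>k\<in>{i..<m}. \<phi> a i k * ut_inv (enat m) (\<phi> a) k m) = (\<Sum>k\<in>{i..<m}. a i k * ut_inv (enat m) a k m)"
    using i by (intro sum.cong) (auto simp: entry_fixed_lower[OF a] inv_entry_fixed_lower[OF a])
  thus ?thesis using ut_entry_eq_inv_sum[OF a True m] ut_entry_eq_inv_sum[OF closed[OF a] True m] by simp
next
  case False thus ?thesis using UT_carrier_lower closed a by (metis not_less)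
qed

lemma entry_fixed_off_corner:
  assumes a: "a \<in> UT_carrier (enat m)" and ij: "(i, j) \<notin> corner m"
  shows "\<phi> a i j = a i j"
proof -
  have "\<not> (i = 1 \<and> j = m - 1) \<and> \<not> (i = 1 \<and> j = m) \<and> \<not> (i = 2 \<and> j = m)" using ij by auto
  hence "j + 2 \<le> m \<or> (2 \<le> i \<and> j < m) \<or> (3 \<le> i \<and> j = m) \<or> j \<le> i \<or> i = 0 \<or> m < j"
    by presburger
  then consider "j + 2 \<le> m" | "2 \<le> i" "j < m" | "3 \<le> i" "j = m" | "j \<le> i" | "i = 0 \<or> m < j"
    by blast
  thus ?thesis
  proof cases
    case 1 thus ?thesis by (intro entry_fixed[OF a]) (simp add: idx_enat)
  next
    case 2 thus ?thesis by (rule entry_fixed_lower[OF a])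
  next
    case 3 thus ?thesis using entry_fixed_last_col[OF a] by simp
  next
    case 4 thus ?thesis using UT_carrier_lower closed a by metis
  next
    case 5
    hence "i \<notin> idx (enat m) \<or> j \<notin> idx (enat m)" by (auto simp: idx_enat)
    thus ?thesis using UT_carrier_outside closed a by metis
  qed
qed

end

section \<open>The second centre\<close>

lemma ut_mult_commute_le2:
  assumes m: "m \<le> 2" and x: "x \<in> UT_carrier (enat m)" and y: "y \<in> UT_carrier (enat m)"
  shows "ut_mult (enat m) x y = ut_mult (enat m) y x"
proof (intro ext)
  fix i j
  show "ut_mult (enat m) x y i j = ut_mult (enat m) y x i j"
  proof (cases "i = 1 \<and> j = 2 \<and> 2 \<le> m")
    case True
    hence "{i..j} = {1, 2}" "1 \<in> idx (enat m)" "2 \<in> idx (enat m)" by (auto simp: idx_enat)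
    hence "x 1 1 = 1" "y 1 1 = 1" "x 2 2 = 1" "y 2 2 = 1" "{i..j} = {1, 2}"
      using UT_carrier_diag[OF x] UT_carrier_diag[OF y] by auto
    thus ?thesis using True by (simp add: ut_mult_apply[OF x y] ut_mult_apply[OF y x])
  next
    case False
    show ?thesis
    proof (cases "i < j")
      case True
      with False m have "i \<notin> idx (enat m) \<or> j \<notin> idx (enat m)" by (auto simp: idx_enat)
      thus ?thesis using UT_carrier_outside ut_mult_closed x y by metis
    next
      case False
      thus ?thesis using UT_carrier_lower ut_mult_closed x y by (metis not_less)
    qed
  qed
qed

lemma transv_1_m_central:
  assumes m: "2 \<le> m"
  shows "transv (enat m) 1 m c \<in> ut_center (enat m)"
  unfolding ut_center_def
proof (intro CollectI conjI ballI)
  have idx: "m \<in> idx (enat m)" "1 \<in> idx (enat m)" using m by (auto simp: idx_enat)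
  show "transv (enat m) 1 m c \<in> UT_carrier (enat m)" by (rule transv_closed) (use m idx in auto)
  fix x :: "'a mat" assume x: "x \<in> UT_carrier (enat m)"
  have "x i (Suc 0) = (if i = Suc 0 then 1 else 0)" for i using UT_carrier_first_col[OF x idx(2)] by simp
  thus "ut_mult (enat m) (transv (enat m) 1 m c) x = ut_mult (enat m) x (transv (enat m) 1 m c)"
    using m idx
    by (intro ext) (simp add: ut_mult_transv_left[OF x] ut_mult_transv_right[OF x] UT_carrier_last_row[OF x])
qed

lemma corner_transv_decomp:
  assumes m: "3 \<le> m" and z: "z \<in> UT_carrier (enat m)"
    and off: "\<And>i j. (i, j) \<notin> corner m \<Longrightarrow> z i j = ut_one (enat m) i j"
  shows "z = ut_mult (enat m) (ut_mult (enat m) (transv (enat m) 2 m (z 2 m))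
                 (transv (enat m) 1 (m - 1) (z 1 (m - 1)))) (transv (enat m) 1 m (z 1 m))"
    (is "z = ut_mult _ (ut_mult _ ?T2 ?T1) ?T3")
proof (intro ext)
  fix i j
  have idx: "1 \<in> idx (enat m)" "m - 1 \<in> idx (enat m)" "m \<in> idx (enat m)" using m by (auto simp: idx_enat)
  have T2: "?T2 \<in> UT_carrier (enat m)" by (rule transv_closed) (use m idx in auto)
  have "ut_mult (enat m) (ut_mult (enat m) ?T2 ?T1) ?T3 i j
      = ut_one (enat m) i j + (if i = 2 \<and> j = m then z 2 m else 0)
        + (if i = 1 \<and> j = m - 1 then z 1 (m - 1) else 0) + (if i = 1 \<and> j = m then z 1 m else 0)"
    using m idx
    by (simp add: ut_mult_transv_right ut_mult_closed transv_closed T2)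
      (simp add: transv_def ut_one_col[OF idx(1), simplified])
  thus "z i j = ut_mult (enat m) (ut_mult (enat m) ?T2 ?T1) ?T3 i j"
    using m off[of i j] by (cases "(i, j) \<in> corner m") (auto simp: ut_one_def)
qed

lemma corner_transv_commute:
  fixes x :: "('a::field) mat" and \<alpha> \<beta> \<gamma> :: 'a
  assumes m: "3 \<le> m" and x: "x \<in> UT_carrier (enat m)"
  defines "z \<equiv> ut_mult (enat m) (ut_mult (enat m) (transv (enat m) 2 m \<gamma>)
                 (transv (enat m) 1 (m - 1) \<alpha>)) (transv (enat m) 1 m \<beta>)"
  shows "ut_mult (enat m) z x
       = ut_mult (enat m) (transv (enat m) 1 m (\<alpha> * x (m - 1) m - \<gamma> * x 1 2)) (ut_mult (enat m) x z)"
proof (intro ext)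
  fix i j
  let ?T1 = "transv (enat m) 1 (m - 1) \<alpha>" and ?T2 = "transv (enat m) 2 m \<gamma>"
    and ?T3 = "transv (enat m) 1 m \<beta>"
  have idx: "1 \<in> idx (enat m)" "2 \<in> idx (enat m)" "m - 1 \<in> idx (enat m)" "m \<in> idx (enat m)"
    using m by (auto simp: idx_enat)
  have T: "?T1 \<in> UT_carrier (enat m)" "?T2 \<in> UT_carrier (enat m)" "?T3 \<in> UT_carrier (enat m)"
    using m idx by (auto intro: transv_closed)
  have m1: "m - 1 \<noteq> 1" "m - 1 \<noteq> m" using m by auto
  have z: "z \<in> UT_carrier (enat m)" unfolding z_def by (intro ut_mult_closed T)
  have x_last: "x m j = (if j = m then 1 else 0)" for j using UT_carrier_last_row[OF x] m by simp
  have x_first: "x i (Suc 0) = (if i = Suc 0 then 1 else 0)" for i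
    using UT_carrier_first_col[OF x idx(1)] by simp
  have x_row: "x (m - 1) j = (if j = m - 1 then 1 else 0)" if "j \<noteq> m"
    using that UT_carrier_below[OF x, of j "m - 1"] UT_carrier_diag[OF x idx(3)]
      UT_carrier_outside[OF x, of "m - 1" j] m
    by (cases "j < m - 1 \<or> m < j") (auto simp: idx_enat)
  have x_col: "x i 2 = (if i = 2 then 1 else if i = 1 then x 1 2 else 0)"
    using UT_carrier_below[OF x, of 2 i] UT_carrier_diag[OF x idx(2)] UT_carrier_outside[OF x, of 0 2]
    by (cases "i = 0"; cases "i = 1"; cases "i = 2") (auto simp: idx_enat)
  have "ut_mult (enat m) z x = ut_mult (enat m) ?T2 (ut_mult (enat m) ?T1 (ut_mult (enat m) ?T3 x))"
    unfolding z_def ut_mult_assoc[OF ut_mult_closed[OF T(2) T(1)] T(3) x]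
    by (rule ut_mult_assoc[OF T(2) T(1) ut_mult_closed[OF T(3) x]])
  hence zx: "ut_mult (enat m) z x i j = x i j + (if i = 1 \<and> j = m then \<beta> else 0)
      + (if i = 1 then \<alpha> * x (m - 1) j else 0) + (if i = 2 \<and> j = m then \<gamma> else 0)"
    using m m1 idx by (simp add: ut_mult_transv_left ut_mult_closed transv_closed x x_last)
  have "ut_mult (enat m) x z = ut_mult (enat m) (ut_mult (enat m) (ut_mult (enat m) x ?T2) ?T1) ?T3"
    unfolding z_def ut_mult_assoc[OF x ut_mult_closed[OF T(2) T(1)] T(3), symmetric]
    by (simp only: ut_mult_assoc[OF x T(2) T(1)])
  hence xz: "ut_mult (enat m) x z i j = x i j + (if j = m then \<gamma> * x i 2 else 0)
      + (if j = m - 1 \<and> i = 1 then \<alpha> else 0) + (if j = m \<and> i = 1 then \<beta> else 0)"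
    using m m1 idx by (simp add: ut_mult_transv_right ut_mult_closed transv_closed x x_first)
  have "ut_mult (enat m) (transv (enat m) 1 m (\<alpha> * x (m - 1) m - \<gamma> * x 1 2)) (ut_mult (enat m) x z) i j
      = ut_mult (enat m) x z i j + (if i = 1 \<and> j = m then \<alpha> * x (m - 1) m - \<gamma> * x 1 2 else 0)"
    using m idx UT_carrier_last_row[OF ut_mult_closed[OF x z]]
    by (simp add: ut_mult_transv_left[OF ut_mult_closed[OF x z]])
  thus "ut_mult (enat m) z x i j
      = ut_mult (enat m) (transv (enat m) 1 m (\<alpha> * x (m - 1) m - \<gamma> * x 1 2)) (ut_mult (enat m) x z) i j"
    unfolding zx xz using m x_row x_col
    by (cases "i = 1"; cases "i = 2"; cases "j = m"; cases "j = m - 1") (auto simp: algebra_simps)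
qed

lemma off_corner_mem_ut_center2:
  assumes z: "z \<in> UT_carrier (enat m)"
    and off: "\<And>i j. (i, j) \<notin> corner m \<Longrightarrow> z i j = ut_one (enat m) i j"
  shows "z \<in> ut_center2 (enat m)"
  unfolding ut_center2_def
proof (intro CollectI conjI ballI z)
  fix x :: "'a mat" assume x: "x \<in> UT_carrier (enat m)"
  show "ut_comm (enat m) z x \<in> ut_center (enat m)"
  proof (cases "m \<le> 2")
    case True
    thus ?thesis using ut_mult_commute_le2 ut_comm_closed[OF z x] by (auto simp: ut_center_def)
  next
    case False
    hence m: "3 \<le> m" by simp
    have "1 \<le> m - 1" "m - 1 < m" "m \<in> idx (enat m)" using m by (auto simp: idx_enat)
    hence T: "transv (enat m) 1 m c \<in> UT_carrier (enat m)" for c by (intro transv_closed) auto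
    have "ut_comm (enat m) z x = transv (enat m) 1 m (z 1 (m - 1) * x (m - 1) m - z 2 m * x 1 2)"
      using corner_transv_commute[OF m x] corner_transv_decomp[OF m z off]
      by (intro ut_comm_eq_of_mult_eq[OF x z T]) metis
    thus ?thesis using transv_1_m_central[of m] m by auto
  qed
qed

lemma ut_one_mem_ut_center2: "ut_one n \<in> ut_center2 n"
proof -
  have comm: "ut_comm n (ut_one n) x = ut_one n" if "x \<in> UT_carrier n" for x
    using that by (intro ut_comm_eq_of_mult_eq ut_one_closed) (simp_all add: ut_mult_one_left ut_mult_one_right)
  show ?thesis
    unfolding ut_center2_def ut_center_def
    by (auto simp: comm ut_one_closed ut_mult_one_left ut_mult_one_right)
qed

lemma subcentral_if_fixed:
  assumes "\<And>a. a \<in> UT_carrier n \<Longrightarrow> \<psi> a = a"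
  shows "subcentral n \<psi>"
  unfolding subcentral_def
  using assms by (intro exI[of _ "\<lambda>_. ut_one n"]) (simp add: ut_one_mem_ut_center2 ut_mult_one_right)

text \<open>The witness is a^-1 \<psi>(a): an entry (i, j) off the corner only involves entries (k, j)
  with k \<ge> i, which are off the corner as well unless i = 0.\<close>
lemma subcentral_if_fixed_off_corner:
  assumes closed: "\<And>a. a \<in> UT_carrier (enat m) \<Longrightarrow> \<psi> a \<in> UT_carrier (enat m)"
    and fixed: "\<And>a i j. a \<in> UT_carrier (enat m) \<Longrightarrow> (i, j) \<notin> corner m \<Longrightarrow> \<psi> a i j = a i j"
  shows "subcentral (enat m) \<psi>"
  unfolding subcentral_def
proof (intro exI ballI conjI)
  fix a :: "'a mat" assume a: "a \<in> UT_carrier (enat m)"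
  let ?z = "ut_mult (enat m) (ut_inv (enat m) a) (\<psi> a)"
  have z: "?z \<in> UT_carrier (enat m)" by (simp add: ut_mult_closed ut_inv_closed a closed)
  show "?z \<in> ut_center2 (enat m)"
  proof (rule off_corner_mem_ut_center2[OF z])
    fix i j :: nat assume ij: "(i, j) \<notin> corner m"
    show "?z i j = ut_one (enat m) i j"
    proof (cases "i = 0")
      case True thus ?thesis using UT_carrier_outside[OF z] by (simp add: ut_one_def idx_enat)
    next
      case False
      have "(k, j) \<notin> corner m" if "k \<in> {i..j}" for k
        using ij that False by (cases "k = 1"; cases "k = 2") auto
      hence "?z i j = ut_mult (enat m) (ut_inv (enat m) a) a i j"
        by (simp add: ut_mult_apply ut_inv_closed a closed fixed)
      thus ?thesis by (simp add: ut_mult_inv_left[OF a])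
    qed
  qed
  show "\<psi> a = ut_mult (enat m) a ?z"
    by (simp add: ut_mult_assoc[OF a ut_inv_closed[OF a] closed[OF a], symmetric]
        ut_mult_inv_right[OF a] ut_mult_one_left[OF closed[OF a]])
qed

lemma pc_fix_transv_if_almost_identity:
  assumes "PC_map n \<phi>" and "almost_identity n \<phi>"
  shows "pc_fix_transv n \<phi>"
  using assms unfolding PC_map_def almost_identity_def bij_betw_def pc_fix_transv_def by blast

theorem mainTheorem5:
  fixes n :: enat and \<phi> :: "('a::field) mat \<Rightarrow> 'a mat"
  assumes "PC_map n \<phi>" and "almost_identity n \<phi>"
  shows "subcentral n \<phi>
    \<and> (n = \<infinity> \<longrightarrow> (\<forall>a\<in>UT_carrier n. \<phi> a = a))
    \<and> (\<forall>m. n = enat m \<longrightarrow> (\<forall>a\<in>UT_carrier n. \<forall>i j.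
          (i, j) \<notin> {(1, m - 1), (1, m), (2, m)} \<longrightarrow> \<phi> a i j = a i j))"
proof -
  have pc: "pc_fix_transv n \<phi>" by (rule pc_fix_transv_if_almost_identity[OF assms])
  show ?thesis
  proof (cases n)
    case (enat m)
    with pc have "pc_fix_transv_fin m \<phi>" by (simp add: pc_fix_transv_fin_def)
    hence "\<And>a i j. a \<in> UT_carrier (enat m) \<Longrightarrow> (i, j) \<notin> corner m \<Longrightarrow> \<phi> a i j = a i j"
      by (rule pc_fix_transv_fin.entry_fixed_off_corner)
    moreover have "subcentral (enat m) \<phi>"
      using pc enat calculation by (intro subcentral_if_fixed_off_corner) (auto intro: pc_fix_transv.closed)
    ultimately show ?thesis using enat by simp
  next
    case infinity
    have "\<phi> a = a" if "a \<in> UT_carrier n" for a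
      using infinity pc_fix_transv.entry_fixed[OF pc that] by (auto simp: idx_def)
    thus ?thesis using subcentral_if_fixed infinity by auto
  qed
qed

end
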